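(* Let $\mathcal{L}(x^* )\in\mathbb{R}^{c\times c}$ be the weighted Laplacian of a complex-balanced mass action chemical reaction network with complex-equilibrium $x^*\in\mathbb{R}_+^m$ (defined in the context), and let $B\in\mathbb{R}^{c\times r}$ be the incidence matrix of its graph of complexes. Then for every $\gamma\in\mathbb{R}^c$, \[ \gamma^T\mathcal{L}(x^* )\,\mathrm{Exp}(\gamma)\ \ge\ 0, \] and $\gamma^T\mathcal{L}(x^* )\,\mathrm{Exp}(\gamma)=0$ if and only if $B^T\gamma=0$.
   Context: A mass action chemical reaction network has $m$ species with concentration vector $x\in\mathbb{R}_+^m$ (strictly positive entries), $c$ complexes and $r$ reactions. The complex-stoichiometric matrix $Z\in\mathbb{R}^{m\times c}$ has nonnegative integer entries; its $\alpha$-th column $Z_\alpha$ gives the composition of complex $\alpha$ in the species. The graph of complexes has the $c$ complexes as vertices and a directed edge for each reaction $j$, from its substrate complex $\mathcal{S}_j$ to its product complex $\mathcal{P}_j$; its incidence matrix $B\in\mathbb{R}^{c\times r}$ has $(\alpha,j)$ entry $-1$ if $\alpha=\mathcal{S}_j$, $+1$ if $\alpha=\mathcal{P}_j$, $0$ otherwise. Each reaction $j$ has rate constant $k_j>0$ and rate $v_j(x)=k_j\exp(Z_{\mathcal{S}_j}^T\mathrm{Ln}(x))$, and the dynamics are $\dot x=ZBv(x)$. For $x\in\mathbb{R}_+^m$, $\mathrm{Ln}(x)$ is the componentwise logarithm, and for $y\in\mathbb{R}^c$, $\mathrm{Exp}(y)$ is the componentwise exponential; $x/x^*$ denotes componentwise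 division. Let $a_{\pi\sigma}=\sum\{k_j:\ \mathcal{S}_j=\sigma,\ \mathcal{P}_j=\pi\}$ (zero if no such reaction), $A=(a_{\pi\sigma})$, $\Delta$ the diagonal matrix whose $\rho$-th diagonal entry is the $\rho$-th column sum of $A$, and $L=\Delta-A$; then $Bv(x)=-L\,\mathrm{Exp}(Z^T\mathrm{Ln}(x))$. A complex-equilibrium is $x^*\in\mathbb{R}_+^m$ with $Bv(x^* )=0$; the network is complex-balanced if a complex-equilibrium exists. Given a complex-equilibrium $x^*$, set $K(x^* )=\mathrm{diag}_{i=1}^c(\exp(Z_i^T\mathrm{Ln}(x^* )))$ and $\mathcal{L}(x^* )=LK(x^* )$ (the weighted Laplacian); it satisfies $\mathbf{1}_c^T\mathcal{L}(x^* )=0$ and $\mathcal{L}(x^* )\mathbf{1}_c=0$, where $\mathbf{1}_c$ is the all-ones vector. *)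

theory Defs
  imports "HOL-Analysis.Analysis"
begin

text \<open>Species are indexed by the finite type 'm,
complexes by the finite type 'c, reactions by the finite type 'r.
Z :: real^'c^'m is the complex-stoichiometric matrix (Z $ i $ \<alpha> = entry in row i, column \<alpha>).
S j / P j are the substrate / product complex of reaction j; k j its rate constant.\<close>

definition Exp_vec :: "real^'n \<Rightarrow> real^'n" where
  "Exp_vec y = (\<chi> i. exp (y $ i))"

definition Ln_vec :: "real^'n \<Rightarrow> real^'n" where
  "Ln_vec x = (\<chi> i. ln (x $ i))"

definition incidence :: "('r \<Rightarrow> 'c) \<Rightarrow> ('r \<Rightarrow> 'c) \<Rightarrow> real^'r^'c" where
  "incidence S P = (\<chi> \<alpha> j. (if \<alpha> = P j then 1 else 0) - (if \<alpha> = S j then 1 else 0))"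

definition rates :: "('r \<Rightarrow> real) \<Rightarrow> real^'c^'m \<Rightarrow> ('r \<Rightarrow> 'c) \<Rightarrow> real^'m \<Rightarrow> real^'r" where
  "rates k Z S x = (\<chi> j. k j * exp (column (S j) Z \<bullet> Ln_vec x))"

definition rate_matrix :: "('r::finite \<Rightarrow> real) \<Rightarrow> ('r \<Rightarrow> 'c) \<Rightarrow> ('r \<Rightarrow> 'c) \<Rightarrow> real^'c^'c" where
  "rate_matrix k S P = (\<chi> \<pi> \<sigma>. \<Sum>j\<in>{j. S j = \<sigma> \<and> P j = \<pi>}. k j)"

definition laplacian :: "('r::finite \<Rightarrow> real) \<Rightarrow> ('r \<Rightarrow> 'c::finite) \<Rightarrow> ('r \<Rightarrow> 'c) \<Rightarrow> real^'c^'c" where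
  "laplacian k S P =
     (\<chi> \<rho> \<sigma>. if \<rho> = \<sigma> then (\<Sum>\<pi>\<in>UNIV. rate_matrix k S P $ \<pi> $ \<rho>) else 0) - rate_matrix k S P"

definition complex_equilibrium ::
  "('r::finite \<Rightarrow> real) \<Rightarrow> real^'c^'m \<Rightarrow> ('r \<Rightarrow> 'c::finite) \<Rightarrow> ('r \<Rightarrow> 'c) \<Rightarrow> real^'m \<Rightarrow> bool" where
  "complex_equilibrium k Z S P x \<longleftrightarrow>
     (\<forall>i. x $ i > 0) \<and> incidence S P *v rates k Z S x = 0"

definition Kdiag :: "real^'c^'m \<Rightarrow> real^'m \<Rightarrow> real^'c^'c" where
  "Kdiag Z x = (\<chi> \<alpha> \<beta>. if \<alpha> = \<beta> then exp (column \<alpha> Z \<bullet> Ln_vec x) else 0)"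

definition weighted_laplacian ::
  "('r::finite \<Rightarrow> real) \<Rightarrow> real^'c^'m \<Rightarrow> ('r \<Rightarrow> 'c::finite) \<Rightarrow> ('r \<Rightarrow> 'c) \<Rightarrow> real^'m \<Rightarrow> real^'c^'c" where
  "weighted_laplacian k Z S P x = laplacian k S P ** Kdiag Z x"

end

theory Submission
  imports Defs
begin

text \<open>Write a_j, b_j for the entries of gamma at the substrate and product of reaction j, and
v = v(x*). Since L K(x*) y = -B (k_j (K(x*) y)_{S_j})_j, the quadratic form is the sum of
v_j e^{a_j} (a_j - b_j). Complex balance B v = 0, paired with Exp(gamma), lets us add the vanishing
sum of v_j (e^{b_j} - e^{a_j}); what remains is a positive combination of the gaps
e^b - e^a - e^a (b - a) of exp above its tangent lines, and such a gap vanishes iff a = b.\<close>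

lemma exp_tangent_gap_nonneg:
  fixes a b :: real
  shows "exp b - exp a - exp a * (b - a) \<ge> 0"
proof -
  have "exp b - exp a - exp a * (b - a) = exp a * (exp (b - a) - (1 + (b - a)))"
    by (simp add: exp_diff algebra_simps)
  then show ?thesis
    using exp_ge_add_one_self[of "b - a"] by simp
qed

lemma exp_tangent_gap_eq_0_iff:
  fixes a b :: real
  shows "exp b - exp a - exp a * (b - a) = 0 \<longleftrightarrow> a = b"
proof -
  have "exp b - exp a - exp a * (b - a) = exp a * (exp (b - a) - (1 + (b - a)))"
    by (simp add: exp_diff algebra_simps)
  then show ?thesis
    using exp_minus_greater[of "a - b"] exp_ge_add_one_self[of "b - a"] by auto
qed

lemma inner_incidence_mult:
  fixes f :: "real^'c::finite" and h :: "real^'r::finite"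
  shows "f \<bullet> (incidence S P *v h) = (\<Sum>j\<in>UNIV. h $ j * (f $ P j - f $ S j))"
proof -
  have "f \<bullet> (incidence S P *v h)
      = (\<Sum>j\<in>UNIV. \<Sum>\<alpha>\<in>UNIV. h $ j * ((if \<alpha> = P j then f $ \<alpha> else 0) - (if \<alpha> = S j then f $ \<alpha> else 0)))"
    unfolding inner_vec_def matrix_vector_mult_def incidence_def
    by (subst sum.swap) (auto simp: sum_distrib_left algebra_simps intro!: sum.cong)
  also have "\<dots> = (\<Sum>j\<in>UNIV. h $ j * (f $ P j - f $ S j))"
    by (simp add: sum_distrib_left[symmetric] sum_subtractf)
  finally show ?thesis .
qed

lemma transpose_incidence_mult_eq_0_iff:
  fixes \<gamma> :: "real^'c::finite"
  shows "transpose (incidence S P) *v \<gamma> = (0 :: real^'r::finite) \<longleftrightarrow> (\<forall>j. \<gamma> $ S j = \<gamma> $ P j)"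
proof -
  have "(transpose (incidence S P) *v \<gamma>) $ j = \<gamma> $ P j - \<gamma> $ S j" for j
    unfolding matrix_vector_mult_def transpose_def incidence_def
    by (simp add: left_diff_distrib sum_subtractf if_distrib[of "\<lambda>x. x * _"] cong: if_cong)
  then show ?thesis by (auto simp: vec_eq_iff)
qed

lemma rate_matrix_nth:
  "rate_matrix k S P $ \<pi> $ \<sigma> = (\<Sum>j\<in>UNIV. if S j = \<sigma> \<and> P j = \<pi> then k j else 0)"
  unfolding rate_matrix_def by (simp add: sum.If_cases Int_def)

lemma laplacian_mult_vec:
  "laplacian k S P *v u = - (incidence S P *v (\<chi> j. k j * u $ S j))"
proof -
  have out: "(\<Sum>\<pi>\<in>UNIV. rate_matrix k S P $ \<pi> $ \<rho>) = (\<Sum>j\<in>UNIV. if S j = \<rho> then k j else 0)" for \<rho>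
    unfolding rate_matrix_nth by (subst sum.swap) (auto intro!: sum.cong)
  have inc: "(\<Sum>\<sigma>\<in>UNIV. rate_matrix k S P $ \<rho> $ \<sigma> * u $ \<sigma>)
      = (\<Sum>j\<in>UNIV. if P j = \<rho> then k j * u $ S j else 0)" for \<rho>
    unfolding rate_matrix_nth sum_distrib_right
    by (subst sum.swap) (auto simp: if_distrib[of "\<lambda>t. t * _"] cong: if_cong intro!: sum.cong)
  have "(laplacian k S P *v u) $ \<rho> = (- (incidence S P *v (\<chi> j. k j * u $ S j))) $ \<rho>" for \<rho>
  proof -
    have "(laplacian k S P *v u) $ \<rho>
        = (\<Sum>\<pi>\<in>UNIV. rate_matrix k S P $ \<pi> $ \<rho>) * u $ \<rho>
          - (\<Sum>\<sigma>\<in>UNIV. rate_matrix k S P $ \<rho> $ \<sigma> * u $ \<sigma>)"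
      unfolding laplacian_def matrix_vector_mult_def
      by (simp add: left_diff_distrib sum_subtractf if_distrib[of "\<lambda>x. x * _"] cong: if_cong)
    then show ?thesis
      unfolding out inc matrix_vector_mult_def incidence_def
      by (simp add: sum_distrib_right sum_subtractf left_diff_distrib if_distrib[of "\<lambda>x. x * _"]
          eq_commute[of \<rho>] cong: if_cong)
  qed
  then show ?thesis by (simp add: vec_eq_iff)
qed

lemma weighted_laplacian_mult_vec:
  "weighted_laplacian k Z S P x *v y = - (incidence S P *v (\<chi> j. rates k Z S x $ j * y $ S j))"
proof -
  have "Kdiag Z x *v y = (\<chi> \<alpha>. exp (column \<alpha> Z \<bullet> Ln_vec x) * y $ \<alpha>)"
    unfolding Kdiag_def matrix_vector_mult_def
    by (simp add: if_distrib[of "\<lambda>t. t * _"] cong: if_cong)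
  then show ?thesis
    unfolding weighted_laplacian_def matrix_vector_mul_assoc[symmetric] laplacian_mult_vec
    by (simp add: rates_def mult.assoc)
qed

theorem lemma1:
  fixes k :: "'r::finite \<Rightarrow> real"
    and Z :: "real^'c::finite^'m::finite"
    and S P :: "'r \<Rightarrow> 'c"
    and xs :: "real^'m"
    and \<gamma> :: "real^'c"
  assumes k_pos: "\<And>j. k j > 0"
    and Z_nat: "\<And>i \<alpha>. Z $ i $ \<alpha> \<in> \<nat>"
    and eq: "complex_equilibrium k Z S P xs"
  shows "\<gamma> \<bullet> (weighted_laplacian k Z S P xs *v Exp_vec \<gamma>) \<ge> 0
    \<and> (\<gamma> \<bullet> (weighted_laplacian k Z S P xs *v Exp_vec \<gamma>) = 0
         \<longleftrightarrow> transpose (incidence S P) *v \<gamma> = 0)"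
proof -
  define v where "v = rates k Z S xs"
  define gap where "gap j = v $ j * (exp (\<gamma> $ P j) - exp (\<gamma> $ S j)
    - exp (\<gamma> $ S j) * (\<gamma> $ P j - \<gamma> $ S j))" for j
  have v_pos: "v $ j > 0" for j
    using k_pos by (simp add: v_def rates_def)
  have "Exp_vec \<gamma> \<bullet> (incidence S P *v v) = 0"
    using eq by (simp add: complex_equilibrium_def v_def)
  then have balance: "(\<Sum>j\<in>UNIV. v $ j * (exp (\<gamma> $ P j) - exp (\<gamma> $ S j))) = 0"
    by (simp add: inner_incidence_mult Exp_vec_def)
  have "\<gamma> \<bullet> (weighted_laplacian k Z S P xs *v Exp_vec \<gamma>) = (\<Sum>j\<in>UNIV. gap j)"
    using balance
    by (simp add: weighted_laplacian_mult_vec inner_incidence_mult gap_def v_def Exp_vec_def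
        algebra_simps sum.distrib sum_subtractf sum_negf)
  moreover have "gap j \<ge> 0" for j
    using v_pos[of j] exp_tangent_gap_nonneg by (simp add: gap_def)
  moreover have "gap j = 0 \<longleftrightarrow> \<gamma> $ S j = \<gamma> $ P j" for j
    using v_pos[of j] exp_tangent_gap_eq_0_iff by (simp add: gap_def)
  ultimately show ?thesis
    unfolding transpose_incidence_mult_eq_0_iff by (simp add: sum_nonneg sum_nonneg_eq_0_iff)
qed

end
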